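(* Let $n=2$ and $\varphi\in\mathcal{M}$ be a matching. Then there exists a matching mechanism that is resolute, $\langle\varphi\rangle$-symmetric and stable.
   Context: Let $W=\{1,2\}$ (women), $M=\{3,4\}$ (men), $I=W\cup M$. Permutations compose right-to-left. A preference profile is a function $p$ on $I$ assigning to each $x\in W$ a linear order $p(x)$ on $M$ and to each $y\in M$ a linear order $p(y)$ on $W$; $\mathcal{P}$ is the set of preference profiles. A matching is a permutation $\mu$ of $I$ with $\mu(W)=M$, $\mu(M)=W$ and $\mu(\mu(z))=z$ for all $z\in I$; $\mathcal{M}$ is the set of matchings. $\mu$ is stable for $p$ if there is no $(x,y)\in W\times M$ with $y\succ_{p(x)}\mu(x)$ and $x\succ_{p(y)}\mu(y)$. Let $G^*=\{\psi\in\mathrm{Sym}(I):\{\psi(W),\psi(M)\}=\{W,M\}\}$. For a linear order $R$ on $X\subseteq I$ and $\psi\in\mathrm{Sym}(I)$, $\psi R$ is the relation on $\psi(X)$ with $(a,b)\in\psi R$ iff $(\psi^{-1}(a),\psi^{-1}(b))\in R$. For $p\in\mathcal{P}$, $\psi\in G^*$, $p^\psi(z)=\psi\,p(\psi^{-1}(z))$. For a permutation $\mu$, $\mu^\psi=\psi\mu\psi^{-1}$; $S^\psi=\{\mu^\psi:\mu\in S\}$. A matching mechanism is a correspondence $F$ from $\mathcal{P}$ to $\mathcal{M}$; it is resolute if $|F(p)|=1$ for all $p$; stable if every element of $F(p)$ is stable for $p$, for all $p$; for $U\subseteq G^*$ it is $U$-symmetric if $F(p^\psi)=F(p)^\psi$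 for all $p\in\mathcal{P}$, $\psi\in U$. $\langle\varphi\rangle=\{id_I,\varphi\}$. *)

theory Defs
  imports Main "HOL-Combinatorics.Permutations"
begin

definition Wom :: "nat set" where "Wom = {1, 2}"
definition Men :: "nat set" where "Men = {3, 4}"
definition Ind :: "nat set" where "Ind = Wom \<union> Men"

text \<open>A linear order R is a relation with (a,b) in R meaning a is weakly
  preferred to b.\<close>

definition profiles :: "(nat \<Rightarrow> (nat \<times> nat) set) set" where
  "profiles = {p. (\<forall>x\<in>Wom. linear_order_on Men (p x)) \<and>
                  (\<forall>y\<in>Men. linear_order_on Wom (p y)) \<and>
                  (\<forall>z. z \<notin> Ind \<longrightarrow> p z = {})}"

definition spref :: "(nat \<times> nat) set \<Rightarrow> nat \<Rightarrow> nat \<Rightarrow> bool" where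
  "spref R a b \<longleftrightarrow> (a, b) \<in> R \<and> a \<noteq> b"

definition matchings :: "(nat \<Rightarrow> nat) set" where
  "matchings = {\<mu>. \<mu> permutes Ind \<and> \<mu> ` Wom = Men \<and> \<mu> ` Men = Wom \<and>
                   (\<forall>z\<in>Ind. \<mu> (\<mu> z) = z)}"

definition stable_for :: "(nat \<Rightarrow> (nat \<times> nat) set) \<Rightarrow> (nat \<Rightarrow> nat) \<Rightarrow> bool" where
  "stable_for p \<mu> \<longleftrightarrow>
     \<not> (\<exists>x\<in>Wom. \<exists>y\<in>Men. spref (p x) y (\<mu> x) \<and> spref (p y) x (\<mu> y))"

definition Gstar :: "(nat \<Rightarrow> nat) set" where
  "Gstar = {\<psi>. \<psi> permutes Ind \<and> {\<psi> ` Wom, \<psi> ` Men} = {Wom, Men}}"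

definition rel_act :: "(nat \<Rightarrow> nat) \<Rightarrow> (nat \<times> nat) set \<Rightarrow> (nat \<times> nat) set" where
  "rel_act \<psi> R = {(a, b). (inv \<psi> a, inv \<psi> b) \<in> R}"

definition prof_act :: "(nat \<Rightarrow> (nat \<times> nat) set) \<Rightarrow> (nat \<Rightarrow> nat) \<Rightarrow> (nat \<Rightarrow> (nat \<times> nat) set)" where
  "prof_act p \<psi> = (\<lambda>z. rel_act \<psi> (p (inv \<psi> z)))"

definition perm_conj :: "(nat \<Rightarrow> nat) \<Rightarrow> (nat \<Rightarrow> nat) \<Rightarrow> (nat \<Rightarrow> nat)" where
  "perm_conj \<mu> \<psi> = \<psi> \<circ> \<mu> \<circ> inv \<psi>"

definition mechanism :: "((nat \<Rightarrow> (nat \<times> nat) set) \<Rightarrow> (nat \<Rightarrow> nat) set) \<Rightarrow> bool" where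
  "mechanism F \<longleftrightarrow> (\<forall>p\<in>profiles. F p \<subseteq> matchings)"

definition resolute :: "((nat \<Rightarrow> (nat \<times> nat) set) \<Rightarrow> (nat \<Rightarrow> nat) set) \<Rightarrow> bool" where
  "resolute F \<longleftrightarrow> (\<forall>p\<in>profiles. card (F p) = 1)"

definition stable_mech :: "((nat \<Rightarrow> (nat \<times> nat) set) \<Rightarrow> (nat \<Rightarrow> nat) set) \<Rightarrow> bool" where
  "stable_mech F \<longleftrightarrow> (\<forall>p\<in>profiles. \<forall>\<mu>\<in>F p. stable_for p \<mu>)"

definition symmetric_wrt :: "(nat \<Rightarrow> nat) set \<Rightarrow> ((nat \<Rightarrow> (nat \<times> nat) set) \<Rightarrow> (nat \<Rightarrow> nat) set) \<Rightarrow> bool" where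
  "symmetric_wrt U F \<longleftrightarrow>
     (\<forall>p\<in>profiles. \<forall>\<psi>\<in>U. F (prof_act p \<psi>) = (\<lambda>\<mu>. perm_conj \<mu> \<psi>) ` F p)"

end

theory Submission
  imports Defs
begin

text \<open>For two women and two men there are only two matchings, and they commute with each
  other, so conjugating by the given matching \<phi> fixes both. For every profile at least one of
  them is stable: a pair blocking one matching consists of partners in the other, and blocking
  pairs for both would force some individual to rank two alternatives both ways. Since
  stability is invariant under relabelling all individuals by \<phi>, the mechanism choosing \<phi>
  when it is stable and the other matching otherwise is \<open>\<langle>\<phi>\<rangle>\<close>-symmetric.\<close>

definition blocking_pair :: "(nat \<Rightarrow> (nat \<times> nat) set) \<Rightarrow> (nat \<Rightarrow> nat) \<Rightarrow> nat \<Rightarrow> nat \<Rightarrow> bool" where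
  "blocking_pair p \<mu> x y \<longleftrightarrow> spref (p x) y (\<mu> x) \<and> spref (p y) x (\<mu> y)"

definition opposite_sexes :: "nat \<Rightarrow> nat \<Rightarrow> bool" where
  "opposite_sexes x y \<longleftrightarrow> x \<in> Wom \<and> y \<in> Men \<or> x \<in> Men \<and> y \<in> Wom"

lemma stable_for_iff_no_blocking_pair:
  "stable_for p \<mu> \<longleftrightarrow> \<not> (\<exists>x y. opposite_sexes x y \<and> blocking_pair p \<mu> x y)"
  unfolding stable_for_def opposite_sexes_def blocking_pair_def by blast

lemma spref_asym: "antisym R \<Longrightarrow> spref R a b \<Longrightarrow> \<not> spref R b a"
  unfolding spref_def antisym_def by blast

lemma profiles_antisym: "p \<in> profiles \<Longrightarrow> z \<in> Ind \<Longrightarrow> antisym (p z)"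
  unfolding profiles_def Ind_def linear_order_on_def partial_order_on_def by blast

lemma spref_rel_act: "inj \<psi> \<Longrightarrow> spref (rel_act \<psi> R) (\<psi> a) (\<psi> b) \<longleftrightarrow> spref R a b"
  unfolding spref_def rel_act_def by (auto dest: injD)

lemma prof_act_apply: "inj \<psi> \<Longrightarrow> prof_act p \<psi> (\<psi> z) = rel_act \<psi> (p z)"
  unfolding prof_act_def by simp

lemma perm_conj_apply: "inj \<psi> \<Longrightarrow> perm_conj \<mu> \<psi> (\<psi> z) = \<psi> (\<mu> z)"
  unfolding perm_conj_def by simp

lemma blocking_pair_act:
  assumes "inj \<psi>"
  shows "blocking_pair (prof_act p \<psi>) (perm_conj \<mu> \<psi>) (\<psi> x) (\<psi> y) \<longleftrightarrow> blocking_pair p \<mu> x y"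
  unfolding blocking_pair_def
  by (simp add: prof_act_apply perm_conj_apply spref_rel_act assms)

lemma Gstar_opposite_sexes:
  assumes "\<psi> \<in> Gstar"
  shows "opposite_sexes (\<psi> x) (\<psi> y) \<longleftrightarrow> opposite_sexes x y"
proof -
  have inj: "inj \<psi>" using assms permutes_inj unfolding Gstar_def by blast
  have mem: "\<psi> z \<in> \<psi> ` A \<longleftrightarrow> z \<in> A" for z A using inj by (auto dest: injD)
  have "\<psi> ` Wom = Wom \<and> \<psi> ` Men = Men \<or> \<psi> ` Wom = Men \<and> \<psi> ` Men = Wom"
    using assms unfolding Gstar_def by (simp add: doubleton_eq_iff)
  then show ?thesis
    unfolding opposite_sexes_def by (metis mem)
qed

lemma stable_for_act:
  assumes "\<psi> \<in> Gstar"
  shows "stable_for (prof_act p \<psi>) (perm_conj \<mu> \<psi>) \<longleftrightarrow> stable_for p \<mu>"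
proof -
  have "bij \<psi>" using assms permutes_bij unfolding Gstar_def by blast
  then have "(\<exists>x y. opposite_sexes x y \<and> blocking_pair (prof_act p \<psi>) (perm_conj \<mu> \<psi>) x y)
      \<longleftrightarrow> (\<exists>x y. opposite_sexes (\<psi> x) (\<psi> y) \<and>
                   blocking_pair (prof_act p \<psi>) (perm_conj \<mu> \<psi>) (\<psi> x) (\<psi> y))"
    by (metis bij_pointE)
  also have "\<dots> \<longleftrightarrow> (\<exists>x y. opposite_sexes x y \<and> blocking_pair p \<mu> x y)"
    using \<open>bij \<psi>\<close> by (simp add: Gstar_opposite_sexes[OF assms] blocking_pair_act bij_is_inj)
  finally show ?thesis by (simp add: stable_for_iff_no_blocking_pair)
qed

lemma matching_involution: "\<mu> \<in> matchings \<Longrightarrow> \<mu> (\<mu> z) = z"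
  unfolding matchings_def by (cases "z \<in> Ind") (auto simp: permutes_def)

lemma matching_inv: "\<mu> \<in> matchings \<Longrightarrow> inv \<mu> = \<mu>"
  by (rule inv_unique_comp) (auto simp: fun_eq_iff matching_involution)

lemma matching_in_Gstar: "\<mu> \<in> matchings \<Longrightarrow> \<mu> \<in> Gstar"
  unfolding matchings_def Gstar_def by auto

definition match13 :: "nat \<Rightarrow> nat" where "match13 = transpose 1 3 \<circ> transpose 2 4"
definition match14 :: "nat \<Rightarrow> nat" where "match14 = transpose 1 4 \<circ> transpose 2 3"

lemma match13_in_matchings: "match13 \<in> matchings"
  and match14_in_matchings: "match14 \<in> matchings"
  unfolding matchings_def match13_def match14_def Ind_def Wom_def Men_def
  by (auto intro!: permutes_compose permutes_swap_id simp: transpose_def)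

lemma match13_ne_match14: "match13 \<noteq> match14"
proof -
  have "match13 1 \<noteq> match14 1" by (simp add: match13_def match14_def transpose_def)
  then show ?thesis by metis
qed

lemma matchings_eq: "matchings = {match13, match14}"
proof
  show "{match13, match14} \<subseteq> matchings"
    using match13_in_matchings match14_in_matchings by blast
next
  show "matchings \<subseteq> {match13, match14}"
  proof
    fix \<mu> assume "\<mu> \<in> matchings"
    then have perm: "\<mu> permutes Ind" and W: "\<mu> ` Wom = Men" and invol: "\<forall>z\<in>Ind. \<mu> (\<mu> z) = z"
      unfolding matchings_def by auto
    have fixed: "\<mu> z = z" if "z \<notin> Ind" for z using perm that by (simp add: permutes_def)
    have "\<mu> 1 \<noteq> \<mu> 2" using permutes_inj[OF perm] by (simp add: inj_eq)
    moreover have "\<mu> 1 \<in> {3, 4}" "\<mu> 2 \<in> {3, 4}" using W by (auto simp: Wom_def Men_def)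
    moreover have "\<mu> (\<mu> 1) = 1" "\<mu> (\<mu> 2) = 2" using invol by (auto simp: Ind_def Wom_def)
    ultimately have "\<mu> 1 = 3 \<and> \<mu> 2 = 4 \<and> \<mu> 3 = 1 \<and> \<mu> 4 = 2 \<or> \<mu> 1 = 4 \<and> \<mu> 2 = 3 \<and> \<mu> 3 = 2 \<and> \<mu> 4 = 1"
      by auto
    then have "\<mu> = match13 \<or> \<mu> = match14"
      using fixed by (auto simp: fun_eq_iff match13_def match14_def transpose_def Ind_def Wom_def Men_def)
    then show "\<mu> \<in> {match13, match14}" by blast
  qed
qed

lemma other_matching_exists: "\<mu> \<in> matchings \<Longrightarrow> \<exists>\<nu>\<in>matchings. \<nu> \<noteq> \<mu>"
  using match13_in_matchings match14_in_matchings match13_ne_match14 by metis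

lemma matchings_commute: "\<mu> \<in> matchings \<Longrightarrow> \<nu> \<in> matchings \<Longrightarrow> perm_conj \<mu> \<nu> = \<mu>"
  using matching_inv[of \<nu>] unfolding perm_conj_def matchings_eq
  by (auto simp: fun_eq_iff match13_def match14_def transpose_def)

lemma partner_in_other_matching:
  assumes "\<mu> \<in> matchings" "\<nu> \<in> matchings" "\<mu> \<noteq> \<nu>" "x \<in> Wom" "y \<in> Men" "y \<noteq> \<mu> x"
  shows "y = \<nu> x"
  using assms unfolding matchings_eq
  by (auto simp: match13_def match14_def transpose_def Wom_def Men_def)

lemma stable_for_one_of_two_matchings:
  assumes p: "p \<in> profiles"
    and \<mu>: "\<mu> \<in> matchings" and \<nu>: "\<nu> \<in> matchings" and "\<mu> \<noteq> \<nu>"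
  shows "stable_for p \<mu> \<or> stable_for p \<nu>"
proof (rule ccontr)
  assume "\<not> ?thesis"
  then obtain x y x' y' where
    x: "x \<in> Wom" and y: "y \<in> Men" and "blocking_pair p \<mu> x y" and
    x': "x' \<in> Wom" and y': "y' \<in> Men" and "blocking_pair p \<nu> x' y'"
    unfolding stable_for_def blocking_pair_def by blast
  then have x_\<mu>: "spref (p x) y (\<mu> x)" and y_\<mu>: "spref (p y) x (\<mu> y)"
    and x'_\<nu>: "spref (p x') y' (\<nu> x')" and y'_\<nu>: "spref (p y') x' (\<nu> y')"
    unfolding blocking_pair_def by auto
  have asym: "spref (p z) a b \<Longrightarrow> \<not> spref (p z) b a" if "z \<in> Wom \<union> Men" for z a b
    using spref_asym profiles_antisym[OF p] that by (auto simp: Ind_def)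
  have "y = \<nu> x"
    using partner_in_other_matching[OF \<mu> \<nu> \<open>\<mu> \<noteq> \<nu>\<close> x y] x_\<mu> by (auto simp: spref_def)
  have "y' = \<mu> x'"
    using partner_in_other_matching[OF \<nu> \<mu> \<open>\<mu> \<noteq> \<nu>\<close>[symmetric] x' y'] x'_\<nu>
    by (auto simp: spref_def)
  show False
  proof (cases "x' = x")
    case True
    then show False using x_\<mu> x'_\<nu> asym[OF UnI1[OF x]] \<open>y = \<nu> x\<close> \<open>y' = \<mu> x'\<close> by simp
  next
    case False
    then have "\<mu> x' \<noteq> \<mu> x"
      by (metis \<mu> matching_involution)
    moreover have "\<mu> x' \<in> Men" using \<mu> x' unfolding matchings_def by blast
    ultimately have "y' = y"
      using partner_in_other_matching[OF \<mu> \<nu> \<open>\<mu> \<noteq> \<nu>\<close> x] \<open>y = \<nu> x\<close> \<open>y' = \<mu> x'\<close> by blast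
    have "\<mu> y = x'" "\<nu> y = x"
      using \<open>y = \<nu> x\<close> \<open>y' = \<mu> x'\<close> \<open>y' = y\<close> matching_involution \<mu> \<nu> by metis+
    \<comment> \<open>the common man y ranks x above his \<mu>-partner x' and x' above his \<nu>-partner x\<close>
    then show False using y_\<mu> y'_\<nu> asym[OF UnI2[OF y]] \<open>y' = y\<close> by simp
  qed
qed

lemma prof_act_id: "prof_act p id = p"
  by (simp add: prof_act_def rel_act_def)

lemma perm_conj_id: "perm_conj \<mu> id = \<mu>"
  by (simp add: perm_conj_def)

lemma symmetric_wrt_insert_id: "symmetric_wrt (insert id U) F \<longleftrightarrow> symmetric_wrt U F"
  by (simp add: symmetric_wrt_def prof_act_id perm_conj_id)

lemma symmetric_wrt_choose_if_stable:
  assumes \<phi>: "\<phi> \<in> matchings" and \<sigma>: "\<sigma> \<in> matchings"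
  shows "symmetric_wrt {\<phi>} (\<lambda>p. {if stable_for p \<phi> then \<phi> else \<sigma>})"
proof -
  have "stable_for (prof_act p \<phi>) \<phi> \<longleftrightarrow> stable_for p \<phi>" for p
    using stable_for_act[OF matching_in_Gstar[OF \<phi>], of p \<phi>] matchings_commute[OF \<phi> \<phi>] by simp
  moreover have "perm_conj \<phi> \<phi> = \<phi>" "perm_conj \<sigma> \<phi> = \<sigma>"
    using matchings_commute \<phi> \<sigma> by blast+
  ultimately show ?thesis by (simp add: symmetric_wrt_def)
qed

theorem theorem7:
  assumes "\<phi> \<in> matchings"
  shows "\<exists>F. mechanism F \<and> resolute F \<and> symmetric_wrt {id, \<phi>} F \<and> stable_mech F"
proof -
  obtain \<sigma> where \<sigma>: "\<sigma> \<in> matchings" "\<sigma> \<noteq> \<phi>"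
    using other_matching_exists[OF assms] by blast
  define F where "F p = {if stable_for p \<phi> then \<phi> else \<sigma>}" for p
  have "mechanism F" "resolute F"
    using assms \<sigma> by (simp_all add: mechanism_def resolute_def F_def)
  moreover have "symmetric_wrt {id, \<phi>} F"
    using symmetric_wrt_choose_if_stable[OF assms \<sigma>(1)]
    by (simp add: symmetric_wrt_insert_id F_def[abs_def])
  moreover have "stable_mech F"
    using stable_for_one_of_two_matchings[OF _ assms \<sigma>(1) \<sigma>(2)[symmetric]]
    by (auto simp: stable_mech_def F_def)
  ultimately show ?thesis by blast
qed

end
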